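(* Fix an integer $n\ge 2$, and assume that for every choice of positive integers $w_1,\ldots,w_n$ one has either $\mathrm{ML}(w_1,\ldots,w_n)=\frac{s}{ns+1}$ for some $s\in\mathbb{N}$ or $\mathrm{ML}(w_1,\ldots,w_n)\ge\frac1n$. Then for any positive real numbers $v_1,\ldots,v_n$, either $\mathrm{ML}(v_1,\ldots,v_n)=\frac{s}{ns+1}$ for some $s\in\mathbb{N}$, or $\mathrm{ML}(v_1,\ldots,v_n)\ge\frac1n$.
   Context: For a real number $x$, $\Vert x\Vert$ denotes the distance from $x$ to the nearest integer. For positive real numbers $v_1,\ldots,v_k$, the maximum loneliness is $\mathrm{ML}(v_1,\ldots,v_k)=\sup_{t\in\mathbb{R}}\min_{1\le i\le k}\Vert t v_i\Vert$ (for integer speeds the supremum is a maximum). Here $\mathbb{N}=\{1,2,3,\ldots\}$. *)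

theory Defs
  imports "HOL-Analysis.Analysis"
begin

definition dist_nint :: "real \<Rightarrow> real" where
  "dist_nint x = \<bar>x - of_int (round x)\<bar>"

definition maxlone :: "nat \<Rightarrow> (nat \<Rightarrow> real) \<Rightarrow> real" where
  "maxlone n v = (SUP t\<in>(UNIV::real set). Min ((\<lambda>i. dist_nint (t * v i)) ` {..<n}))"

end

theory Submission
  imports Defs "HOL-Analysis.Kronecker_Approximation_Theorem"
begin

text \<open>
  By Dirichlet's simultaneous approximation theorem, for every \<open>\<delta> > 0\<close> some integer \<open>q \<ge> 1\<close>
  brings all \<open>q v\<^sub>i\<close> within \<open>\<delta>\<close> of integers \<open>p\<^sub>i\<close>. The loneliness function of the integer
  speeds \<open>p\<close> is 1-periodic, and on \<open>[0,1)\<close> its value at \<open>t\<close> is within \<open>\<delta>\<close> of that of \<open>v\<close>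
  at \<open>q t\<close>; conversely the value of \<open>v\<close> at \<open>t\<close> is within \<open>|t| \<delta>\<close> of that of \<open>p\<close> at \<open>t / q\<close>.
  Hence \<open>ML(v)\<close> is a limit of values \<open>ML(w)\<close> at positive integer speeds \<open>w\<close>. These lie in
  \<open>{s / (ns + 1) | s \<ge> 1} \<union> [1/n, \<infinity>)\<close>, which is closed because \<open>s / (ns + 1)\<close> accumulates
  only at \<open>1/n\<close>.
\<close>

lemma dist_nint_le: "dist_nint x \<le> \<bar>x - of_int m\<bar>"
  unfolding dist_nint_def by (rule round_diff_minimal)

lemma dist_nint_le_half: "dist_nint x \<le> 1/2"
  unfolding dist_nint_def using of_int_round_abs_le[of x] by linarith

lemma dist_nint_le_dist_nint_add: "dist_nint x \<le> dist_nint y + \<bar>x - y\<bar>"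
proof -
  have "dist_nint x \<le> \<bar>x - of_int (round y)\<bar>" by (rule dist_nint_le)
  then show ?thesis unfolding dist_nint_def by linarith
qed

lemma dist_nint_add_of_int [simp]: "dist_nint (x + of_int k) = dist_nint x"
proof -
  have "round (x + of_int k) = round x + k"
    using floor_add_int[of "x + 1/2" k] by (simp add: round_def algebra_simps)
  then show ?thesis unfolding dist_nint_def by simp
qed

definition loneliness :: "nat \<Rightarrow> (nat \<Rightarrow> real) \<Rightarrow> real \<Rightarrow> real" where
  "loneliness n v t = Min ((\<lambda>i. dist_nint (t * v i)) ` {..<n})"

lemma maxlone_eq_SUP_loneliness: "maxlone n v = (SUP t. loneliness n v t)"
  unfolding maxlone_def loneliness_def by simp

lemma maxlone_cong: "(\<And>i. i < n \<Longrightarrow> u i = v i) \<Longrightarrow> maxlone n u = maxlone n v"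
  unfolding maxlone_def by (metis (no_types, lifting) image_cong lessThan_iff)

lemma loneliness_le_dist_nint: "i < n \<Longrightarrow> loneliness n v t \<le> dist_nint (t * v i)"
  unfolding loneliness_def by (intro Min_le) auto

lemma bdd_above_loneliness:
  assumes "n > 0"
  shows "bdd_above (range (loneliness n v))"
proof (rule bdd_aboveI)
  fix x assume "x \<in> range (loneliness n v)"
  then obtain t where "x = loneliness n v t" by blast
  then show "x \<le> 1/2"
    using loneliness_le_dist_nint[OF assms, of v t] dist_nint_le_half[of "t * v 0"] by linarith
qed

lemma loneliness_le_maxlone: "n > 0 \<Longrightarrow> loneliness n v t \<le> maxlone n v"
  unfolding maxlone_eq_SUP_loneliness by (rule cSUP_upper) (auto intro: bdd_above_loneliness)

lemma maxlone_least: "(\<And>t. loneliness n v t \<le> c) \<Longrightarrow> maxlone n v \<le> c"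
  unfolding maxlone_eq_SUP_loneliness by (rule cSUP_least) auto

lemma loneliness_perturb:
  assumes "n > 0" and "\<And>i. i < n \<Longrightarrow> \<bar>t * a i - s * b i\<bar> \<le> e"
  shows "loneliness n a t \<le> loneliness n b s + e"
proof -
  have "loneliness n b s \<in> (\<lambda>i. dist_nint (s * b i)) ` {..<n}"
    unfolding loneliness_def using assms(1) by (intro Min_in) auto
  then obtain j where j: "j < n" "loneliness n b s = dist_nint (s * b j)" by auto
  have "loneliness n a t \<le> dist_nint (t * a j)" using j(1) by (rule loneliness_le_dist_nint)
  also have "\<dots> \<le> dist_nint (s * b j) + \<bar>t * a j - s * b j\<bar>" by (rule dist_nint_le_dist_nint_add)
  finally show ?thesis using j assms(2)[of j] by linarith
qed

lemma loneliness_int_speeds_frac: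
  "loneliness n (\<lambda>i. of_int (p i)) (frac t) = loneliness n (\<lambda>i. of_int (p i)) t"
proof -
  have "dist_nint (frac t * of_int (p i)) = dist_nint (t * of_int (p i))" for i
    using dist_nint_add_of_int[of "frac t * of_int (p i)" "\<lfloor>t\<rfloor> * p i"]
    by (simp add: frac_def algebra_simps)
  then show ?thesis unfolding loneliness_def by simp
qed

lemma maxlone_int_speeds_le:
  fixes q :: int
  assumes "n > 0" "q > 0" and close: "\<And>i. i < n \<Longrightarrow> \<bar>of_int q * v i - of_int (p i)\<bar> \<le> \<delta>"
  shows "maxlone n (\<lambda>i. of_int (p i)) \<le> maxlone n v + \<delta>"
proof (rule maxlone_least)
  fix t
  have "\<bar>frac t * of_int (p i) - (frac t * of_int q) * v i\<bar> \<le> \<delta>" if "i < n" for i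
  proof -
    have "\<bar>frac t * of_int (p i) - (frac t * of_int q) * v i\<bar>
        = frac t * \<bar>of_int q * v i - of_int (p i)\<bar>"
      by (metis abs_minus_commute abs_mult abs_of_nonneg frac_ge_0 mult.assoc right_diff_distrib)
    also have "\<dots> \<le> 1 * \<delta>"
      using close[OF that] frac_lt_1[of t] by (intro mult_mono) auto
    finally show ?thesis by simp
  qed
  then have "loneliness n (\<lambda>i. of_int (p i)) (frac t) \<le> loneliness n v (frac t * of_int q) + \<delta>"
    using \<open>n > 0\<close> by (intro loneliness_perturb)
  then show "loneliness n (\<lambda>i. of_int (p i)) t \<le> maxlone n v + \<delta>"
    using loneliness_le_maxlone[OF \<open>n > 0\<close>, of v "frac t * of_int q"]
    by (simp add: loneliness_int_speeds_frac)
qed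

lemma loneliness_le_maxlone_int_speeds:
  fixes q :: int
  assumes "n > 0" "q > 0" and close: "\<And>i. i < n \<Longrightarrow> \<bar>of_int q * v i - of_int (p i)\<bar> \<le> \<delta>"
  shows "loneliness n v t \<le> maxlone n (\<lambda>i. of_int (p i)) + \<bar>t\<bar> * \<delta>"
proof -
  have "\<bar>t * v i - t / of_int q * of_int (p i)\<bar> \<le> \<bar>t\<bar> * \<delta>" if "i < n" for i
  proof -
    have "t * v i - t / of_int q * of_int (p i) = t / of_int q * (of_int q * v i - of_int (p i))"
      using \<open>q > 0\<close> by (simp add: field_simps)
    then have "\<bar>t * v i - t / of_int q * of_int (p i)\<bar>
        = \<bar>t\<bar> / of_int q * \<bar>of_int q * v i - of_int (p i)\<bar>"
      using \<open>q > 0\<close> by (simp add: abs_mult)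
    also have "\<dots> \<le> \<bar>t\<bar> * \<delta>"
      using close[OF that] \<open>q > 0\<close>
      by (intro mult_mono) (auto simp: divide_le_eq mult_le_cancel_left1)
    finally show ?thesis .
  qed
  then have "loneliness n v t \<le> loneliness n (\<lambda>i. of_int (p i)) (t / of_int q) + \<bar>t\<bar> * \<delta>"
    using \<open>n > 0\<close> by (intro loneliness_perturb)
  then show ?thesis
    using loneliness_le_maxlone[OF \<open>n > 0\<close>, of "\<lambda>i. of_int (p i)" "t / of_int q"] by linarith
qed

lemma maxlone_approx_by_nat_speeds:
  assumes "n > 0" and pos: "\<forall>i<n. v i > 0" and "\<epsilon> > 0"
  obtains w :: "nat \<Rightarrow> nat"
  where "\<forall>i<n. w i > 0" "\<bar>maxlone n (\<lambda>i. real (w i)) - maxlone n v\<bar> < \<epsilon>"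
proof -
  have "maxlone n v - \<epsilon> / 2 < (SUP t. loneliness n v t)"
    using \<open>\<epsilon> > 0\<close> by (simp add: maxlone_eq_SUP_loneliness)
  then obtain t0 where t0: "maxlone n v - \<epsilon> / 2 < loneliness n v t0"
    using less_cSUP_iff[OF _ bdd_above_loneliness[OF \<open>n > 0\<close>]] by auto
  define m where "m = Min (v ` {..<n})"
  have "m \<in> v ` {..<n}" unfolding m_def using \<open>n > 0\<close> by (intro Min_in) auto
  then have "m > 0" using pos by auto
  have m_le: "m \<le> v i" if "i < n" for i unfolding m_def using that by (intro Min_le) auto
  define \<delta> where "\<delta> = min (\<epsilon> / 2 / (\<bar>t0\<bar> + 1)) m"
  have "\<delta> > 0" unfolding \<delta>_def using \<open>\<epsilon> > 0\<close> \<open>m > 0\<close> by (simp add: add_pos_nonneg)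
  have "(\<bar>t0\<bar> + 1) * \<delta> \<le> (\<bar>t0\<bar> + 1) * (\<epsilon> / 2 / (\<bar>t0\<bar> + 1))"
    unfolding \<delta>_def by (intro mult_left_mono) auto
  also have "\<dots> = \<epsilon> / 2" by (simp add: add_pos_nonneg field_simps)
  finally have "(\<bar>t0\<bar> + 1) * \<delta> \<le> \<epsilon> / 2" .
  then have "\<bar>t0\<bar> * \<delta> + \<delta> \<le> \<epsilon> / 2" by (simp only: distrib_right mult_1_left)
  moreover have "0 \<le> \<bar>t0\<bar> * \<delta>" using \<open>\<delta> > 0\<close> by simp
  ultimately have \<delta>_small: "\<bar>t0\<bar> * \<delta> \<le> \<epsilon> / 2" "\<delta> \<le> \<epsilon> / 2"
    using \<open>\<delta> > 0\<close> by linarith+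
  obtain N :: nat where "N > 0" "1 / real N < \<delta>"
    using \<open>\<delta> > 0\<close> by (metis gr_zeroI inverse_eq_divide real_arch_inverse)
  obtain q p where "0 < q"
    and Dirichlet: "\<And>i. i < n \<Longrightarrow> \<bar>of_int q * v i - of_int (p i)\<bar> < 1 / real N"
    using Dirichlet_approx_simult[OF \<open>N > 0\<close>, where \<theta>=v and n=n] by blast
  have approx: "\<bar>of_int q * v i - of_int (p i)\<bar> < \<delta>" if "i < n" for i
    using Dirichlet[OF that] \<open>1 / real N < \<delta>\<close> by linarith
  have p_pos: "p i > 0" if "i < n" for i
  proof -
    have "of_int q * v i \<ge> v i" using \<open>0 < q\<close> pos that by simp
    then have "real_of_int (p i) > 0"
      using approx[OF that] m_le[OF that] unfolding \<delta>_def by linarith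
    then show ?thesis by simp
  qed
  define w where "w i = nat (p i)" for i
  have "real (w i) = of_int (p i)" if "i < n" for i using p_pos[OF that] by (simp add: w_def)
  then have "maxlone n (\<lambda>i. real (w i)) = maxlone n (\<lambda>i. of_int (p i))" by (rule maxlone_cong)
  moreover have "maxlone n (\<lambda>i. of_int (p i)) \<le> maxlone n v + \<delta>"
    by (rule maxlone_int_speeds_le[OF \<open>n > 0\<close> \<open>0 < q\<close> less_imp_le[OF approx]])
  moreover have "loneliness n v t0 \<le> maxlone n (\<lambda>i. of_int (p i)) + \<bar>t0\<bar> * \<delta>"
    by (rule loneliness_le_maxlone_int_speeds[OF \<open>n > 0\<close> \<open>0 < q\<close> less_imp_le[OF approx]])
  ultimately have "\<bar>maxlone n (\<lambda>i. real (w i)) - maxlone n v\<bar> < \<epsilon>"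
    using t0 \<delta>_small unfolding abs_less_iff by linarith
  moreover have "\<forall>i<n. w i > 0" using p_pos by (simp add: w_def)
  ultimately show thesis using that by blast
qed

lemma closed_lonely_values:
  assumes "n > 0"
  shows "closed ({real s / (real n * real s + 1) | s :: nat. s \<ge> 1} \<union> {1 / real n..})"
    (is "closed ?S")
proof -
  have "x \<in> ?S" if x: "x \<in> closure ?S" for x
  proof (rule ccontr)
    assume "x \<notin> ?S"
    then have "x < 1 / real n" by auto
    define y where "y = (x + 1 / real n) / 2"
    have "x < y" "y < 1 / real n" "real n * y < 1" using \<open>x < 1 / real n\<close> \<open>n > 0\<close>
      by (auto simp: y_def field_simps)
    define B where "B = nat \<lceil>y / (1 - real n * y)\<rceil>"
    have small_s: "s \<le> B" if "real s / (real n * real s + 1) < y" for s :: nat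
    proof -
      have "0 < real n * real s + 1" by (intro add_nonneg_pos) auto
      then have "real s < y * (real n * real s + 1)" using that by (simp add: pos_divide_less_eq)
      then have "real s * (1 - real n * y) < y" by (simp add: algebra_simps)
      then have "real s \<le> y / (1 - real n * y)" using \<open>real n * y < 1\<close> by (simp add: le_divide_eq)
      then have "real s \<le> of_int \<lceil>y / (1 - real n * y)\<rceil>" by linarith
      then show ?thesis unfolding B_def by linarith
    qed
    have "{..<y} \<inter> ?S \<subseteq> (\<lambda>s. real s / (real n * real s + 1)) ` {..B}"
    proof
      fix z assume "z \<in> {..<y} \<inter> ?S"
      then obtain s :: nat where "z = real s / (real n * real s + 1)" "z < y"
        using \<open>y < 1 / real n\<close> by auto
      then show "z \<in> (\<lambda>s. real s / (real n * real s + 1)) ` {..B}" using small_s by auto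
    qed
    then have "closed ({..<y} \<inter> ?S)" by (meson finite_imp_closed finite_subset finite_imageI finite_atMost)
    moreover have "x \<in> closure ({..<y} \<inter> ?S)"
      using open_Int_closure_subset[OF open_lessThan, of y ?S] x \<open>x < y\<close> by blast
    ultimately show False using \<open>x \<notin> ?S\<close> by (simp add: closure_closed)
  qed
  then show ?thesis using closure_subset_eq by blast
qed

theorem theorem3p4:
  fixes n :: nat
  assumes n2: "n \<ge> 2"
    and int_case: "\<And>w :: nat \<Rightarrow> nat. (\<forall>i<n. w i > 0) \<Longrightarrow>
        (\<exists>s::nat. s \<ge> 1 \<and> maxlone n (\<lambda>i. real (w i)) = real s / (real n * real s + 1))
        \<or> maxlone n (\<lambda>i. real (w i)) \<ge> 1 / real n"
  shows "\<And>v :: nat \<Rightarrow> real. (\<forall>i<n. v i > 0) \<Longrightarrow>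
        (\<exists>s::nat. s \<ge> 1 \<and> maxlone n v = real s / (real n * real s + 1))
        \<or> maxlone n v \<ge> 1 / real n"
proof -
  fix v :: "nat \<Rightarrow> real"
  assume pos: "\<forall>i<n. v i > 0"
  define S where "S = {real s / (real n * real s + 1) | s :: nat. s \<ge> 1} \<union> {1 / real n..}"
  have "n > 0" using n2 by simp
  have "maxlone n v \<in> closure S"
    unfolding closure_approachable
  proof (intro allI impI)
    fix \<epsilon> :: real assume "\<epsilon> > 0"
    then obtain w where "\<forall>i<n. w i > 0" "\<bar>maxlone n (\<lambda>i. real (w i)) - maxlone n v\<bar> < \<epsilon>"
      using maxlone_approx_by_nat_speeds[OF \<open>n > 0\<close> pos] by blast
    moreover from int_case[OF this(1)] have "maxlone n (\<lambda>i. real (w i)) \<in> S"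
      unfolding S_def by auto
    ultimately show "\<exists>y\<in>S. dist y (maxlone n v) < \<epsilon>" by (auto simp: dist_real_def)
  qed
  moreover have "closed S" unfolding S_def using \<open>n > 0\<close> by (rule closed_lonely_values)
  ultimately have "maxlone n v \<in> S" by (simp add: closure_closed)
  then show "(\<exists>s::nat. s \<ge> 1 \<and> maxlone n v = real s / (real n * real s + 1))
        \<or> maxlone n v \<ge> 1 / real n"
    unfolding S_def by auto
qed

end
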